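(* Let $A,B\in\widehat\Xi_d$ and write $[B]*[A]=\sum_{C\in\widehat\Xi_d}Q^C_{B,A}[C]$ in $\widehat{\mathbb S}_d$. Suppose $B=\sum_{j=1}^n(\beta_jE^{j,j}+\alpha_jE^{j,j+1})$ or $B=\sum_{j=1}^n(\beta_jE^{j,j}+\alpha_jE^{j+1,j})$ for some $\alpha_j,\beta_j\in\mathbb Z_{\ge0}$. If $Q^C_{B,A}\neq0$, then $\varepsilon_i(C)=\varepsilon_i(A)+\varepsilon_i(B)$ for all $i\in\mathbb Z$.
   Context: Fix $n\ge1$, $d\ge0$, $\mathbb A=\mathbb Z[v,v^{-1}]$. $\widehat\Xi_d$ is the set of $\mathbb Z\times\mathbb Z$ matrices $A=(a_{ij})$ with $a_{ij}\in\mathbb Z_{\ge0}$, $a_{i+n,j+n}=a_{ij}$ and $\sum_{1\le i\le n,\,j\in\mathbb Z}a_{ij}=d$. $E^{i,j}$ is the $\mathbb Z\times\mathbb Z$ matrix with $(k,l)$-entry $1$ if $(k,l)=(i+pn,j+pn)$ for some $p\in\mathbb Z$ and $0$ otherwise. $\widehat{\mathbb S}_d$ is the generic affine $v$-Schur algebra: the free $\mathbb A$-algebra with basis $\{e_A\}_{A\in\widehat\Xi_d}$ whose structure constants specialize at $v=\sqrt q$ to those of the convolution algebra of $GL_d(\mathbb F_q((\varepsilon)))$-invariant functions on pairs of periodic lattice chains (of period $n$) with respect to characteristic functions of orbits, orbits being indexed by $\widehat\Xi_d$ via $a_{ij}=\dim\frac{\mathbf L_i\cap\mathbf L'_j}{\mathbf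 L_{i-1}\cap\mathbf L'_j+\mathbf L_i\cap\mathbf L'_{j-1}}$. The standard basis is $[A]=v^{-d_A}e_A$ with $d_A=\sum_{1\le i\le n,\ i\ge k,\ j<l}a_{ij}a_{kl}$. For $i\in\mathbb Z$, $\varepsilon_i(A)=\sum_{r\le i<s}a_{rs}-\sum_{r>i\ge s}a_{rs}$. *)

theory Defs
  imports "HOL-Computational_Algebra.Formal_Laurent_Series"
begin

(* Vectors of V = F^d with F = k((eps)), k a finite field; a vector is a function
   nat => k fls vanishing outside {..<d}. *)
definition vecs :: "nat \<Rightarrow> (nat \<Rightarrow> 'a::field fls) set" where
  "vecs d = {x. \<forall>k\<ge>d. x k = 0}"

definition intO :: "'a::field fls set" where
  "intO = {c. \<forall>m<0. fls_nth c m = 0}"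

definition vadd :: "(nat \<Rightarrow> 'a::field fls) \<Rightarrow> (nat \<Rightarrow> 'a fls) \<Rightarrow> nat \<Rightarrow> 'a fls" where
  "vadd x y = (\<lambda>k. x k + y k)"

definition std_lat :: "nat \<Rightarrow> int \<Rightarrow> (nat \<Rightarrow> 'a::field fls) set" where
  "std_lat d N = {x \<in> vecs d. \<forall>k<d. \<forall>m<N. fls_nth (x k) m = 0}"

definition is_lattice :: "nat \<Rightarrow> (nat \<Rightarrow> 'a::field fls) set \<Rightarrow> bool" where
  "is_lattice d L \<longleftrightarrow> L \<subseteq> vecs d \<and> (\<lambda>k. 0) \<in> L \<and>
     (\<forall>x\<in>L. \<forall>y\<in>L. vadd x y \<in> L) \<and>
     (\<forall>c\<in>intO. \<forall>x\<in>L. (\<lambda>k. c * x k) \<in> L) \<and>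
     (\<exists>N::int. std_lat d N \<subseteq> L \<and> L \<subseteq> std_lat d (- N))"

definition lchain :: "nat \<Rightarrow> nat \<Rightarrow> (int \<Rightarrow> (nat \<Rightarrow> 'a::field fls) set) \<Rightarrow> bool" where
  "lchain n d L \<longleftrightarrow> (\<forall>i. is_lattice d (L i)) \<and> (\<forall>i. L (i - 1) \<subseteq> L i) \<and>
     (\<forall>i. L (i + int n) = (\<lambda>x. (\<lambda>k. fls_X_inv * x k)) ` L i)"

definition msum :: "(nat \<Rightarrow> 'a::field fls) set \<Rightarrow> (nat \<Rightarrow> 'a fls) set \<Rightarrow> (nat \<Rightarrow> 'a fls) set" where
  "msum X Y = {vadd x y | x y. x \<in> X \<and> y \<in> Y}"

(* F_q-dimension of the finite quotient X/Y, q = card UNIV: q^dim = #(X/Y) *)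
definition qdim :: "(nat \<Rightarrow> 'a::{field,finite} fls) set \<Rightarrow> (nat \<Rightarrow> 'a fls) set \<Rightarrow> nat" where
  "qdim X Y = (THE a. card ((\<lambda>x. vadd x ` Y) ` X) = card (UNIV :: 'a set) ^ a)"

definition relpos :: "(int \<Rightarrow> (nat \<Rightarrow> 'a::{field,finite} fls) set) \<Rightarrow> (int \<Rightarrow> (nat \<Rightarrow> 'a fls) set)
    \<Rightarrow> int \<Rightarrow> int \<Rightarrow> nat" where
  "relpos L L' i j = qdim (L i \<inter> L' j) (msum (L (i - 1) \<inter> L' j) (L i \<inter> L' (j - 1)))"

definition Xi :: "nat \<Rightarrow> nat \<Rightarrow> (int \<Rightarrow> int \<Rightarrow> nat) \<Rightarrow> bool" where
  "Xi n d A \<longleftrightarrow> (\<forall>i j. A (i + int n) (j + int n) = A i j) \<and>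
     finite {(i, j). 1 \<le> i \<and> i \<le> int n \<and> A i j \<noteq> 0} \<and>
     (\<Sum>(i, j)\<in>{(i, j). 1 \<le> i \<and> i \<le> int n \<and> A i j \<noteq> 0}. A i j) = d"

definition Emat :: "nat \<Rightarrow> int \<Rightarrow> int \<Rightarrow> int \<Rightarrow> int \<Rightarrow> nat" where
  "Emat n i j k l = (if \<exists>p::int. k = i + p * int n \<and> l = j + p * int n then 1 else 0)"

definition eps :: "(int \<Rightarrow> int \<Rightarrow> nat) \<Rightarrow> int \<Rightarrow> int" where
  "eps A i = (\<Sum>(r, s)\<in>{(r, s). r \<le> i \<and> i < s \<and> A r s \<noteq> 0}. int (A r s))
           - (\<Sum>(r, s)\<in>{(r, s). i < r \<and> s \<le> i \<and> A r s \<noteq> 0}. int (A r s))"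

(* Structure constant of the convolution algebra over k = 'a (q = card UNIV):
   e_B * e_A = \<Sum>_C count(B,A,C) e_C, with
   count(B,A,C) = #{L''. (L,L'') \<in> O_B, (L'',L') \<in> O_A} for a fixed (L,L') \<in> O_C. *)
definition struct_count :: "'a::{field,finite} itself \<Rightarrow> nat \<Rightarrow> nat \<Rightarrow>
    (int \<Rightarrow> int \<Rightarrow> nat) \<Rightarrow> (int \<Rightarrow> int \<Rightarrow> nat) \<Rightarrow> (int \<Rightarrow> int \<Rightarrow> nat) \<Rightarrow> nat" where
  "struct_count _ n d B A C =
     (let P = (SOME P :: (int \<Rightarrow> (nat \<Rightarrow> 'a fls) set) \<times> (int \<Rightarrow> (nat \<Rightarrow> 'a fls) set).
                 lchain n d (fst P) \<and> lchain n d (snd P) \<and> relpos (fst P) (snd P) = C)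
      in card {L''. lchain n d L'' \<and> relpos (fst P) L'' = B \<and> relpos L'' (snd P) = A})"

end

(*
  For periodic lattice chains L, L' in relative position A, the number eps_i(A) is the signed
  index dim (L_i / L_i \<inter> L'_i) - dim (L'_i / L_i \<inter> L'_i).  Indeed, filtering L_i \<inter> L'_s by s,
  and each step of that filtration by the lattices L_t \<inter> L'_s + L_i \<inter> L'_(s-1), the modular law
  and the second isomorphism theorem identify the successive quotients with the entries a_ts,
  whence dim (L_i / L_i \<inter> L'_i) is the sum of the a_rs with r <= i < s; the other term is
  symmetric.  Computed through a common sublattice, signed indices are additive along three
  chains L, L'', L'.  A nonzero structure constant yields a chain L'' with (L, L'') of type B and
  (L'', L') of type A, where (L, L') is the chosen pair of type C; that such a pair exists at all
  is seen by realizing C with chains of monomial lattices.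
*)

theory Submission
  imports Defs "HOL-Library.Function_Algebras" "HOL-Library.Set_Algebras"
    "HOL-Library.FuncSet" "HOL-Library.Multiset"
begin

section \<open>Cosets of additive subgroups\<close>

lemma card_image_eq_if_same_kernel:
  assumes "\<And>x x'. x \<in> X \<Longrightarrow> x' \<in> X \<Longrightarrow> g x = g x' \<longleftrightarrow> f x = f x'"
  shows "card (g ` X) = card (f ` X)"
proof -
  define \<phi> where "\<phi> y = g (inv_into X f y)" for y
  have \<phi>: "\<phi> (f x) = g x" if "x \<in> X" for x
    unfolding \<phi>_def using assms that inv_into_into[of "f x" f X] f_inv_into_f[of "f x" f X] by auto
  have "g ` X = \<phi> ` f ` X"
    using \<phi> by (force simp: image_image)
  moreover have "inj_on \<phi> (f ` X)"
    using \<phi> assms by (auto simp: inj_on_def)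
  ultimately show ?thesis by (simp add: card_image)
qed

definition add_subgroup :: "'v::ab_group_add set \<Rightarrow> bool" where
  "add_subgroup Y \<longleftrightarrow> 0 \<in> Y \<and> (\<forall>x\<in>Y. \<forall>y\<in>Y. x + y \<in> Y) \<and> (\<forall>x\<in>Y. - x \<in> Y)"

definition cosets :: "'v::ab_group_add set \<Rightarrow> 'v set \<Rightarrow> 'v set set" where
  "cosets X Y = (\<lambda>x. x +o Y) ` X"

lemma add_subgroup_0: "add_subgroup Y \<Longrightarrow> 0 \<in> Y"
  unfolding add_subgroup_def by blast

lemma add_subgroup_add: "add_subgroup Y \<Longrightarrow> x \<in> Y \<Longrightarrow> y \<in> Y \<Longrightarrow> x + y \<in> Y"
  unfolding add_subgroup_def by blast

lemma add_subgroup_diff: "add_subgroup Y \<Longrightarrow> x \<in> Y \<Longrightarrow> y \<in> Y \<Longrightarrow> x - y \<in> Y"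
  unfolding add_subgroup_def by (metis diff_conv_add_uminus)

lemma add_subgroup_Int: "add_subgroup A \<Longrightarrow> add_subgroup B \<Longrightarrow> add_subgroup (A \<inter> B)"
  unfolding add_subgroup_def by blast

lemma add_subgroup_set_plus:
  assumes "add_subgroup A" "add_subgroup B"
  shows "add_subgroup (A + B)"
  unfolding add_subgroup_def
proof (intro conjI ballI)
  show "0 \<in> A + B"
    using set_plus_intro[OF add_subgroup_0 add_subgroup_0, OF assms] by simp
next
  fix x y assume "x \<in> A + B" "y \<in> A + B"
  then obtain a b a' b' where "a \<in> A" "b \<in> B" "a' \<in> A" "b' \<in> B" "x = a + b" "y = a' + b'"
    by (auto elim!: set_plus_elim)
  then show "x + y \<in> A + B"
    using set_plus_intro[OF add_subgroup_add[OF assms(1)] add_subgroup_add[OF assms(2)]]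
    by (metis add.assoc add.left_commute)
next
  fix x assume "x \<in> A + B"
  then obtain a b where "a \<in> A" "b \<in> B" "x = a + b" by (auto elim!: set_plus_elim)
  then show "- x \<in> A + B"
    using assms unfolding add_subgroup_def by (metis minus_add_distrib add.commute set_plus_intro)
qed

lemma set_plus_subset_add_subgroup: "add_subgroup X \<Longrightarrow> A \<subseteq> X \<Longrightarrow> B \<subseteq> X \<Longrightarrow> A + B \<subseteq> X"
  using add_subgroup_add by (fastforce elim!: set_plus_elim)

lemma set_plus_absorb:
  assumes "add_subgroup A" "add_subgroup B" "B \<subseteq> A"
  shows "A + B = A"
  using set_plus_subset_add_subgroup[OF assms(1) order.refl assms(3)]
    set_zero_plus2[OF add_subgroup_0[OF assms(2)], of A]
  by (simp add: add.commute)

lemma coset_eq_iff: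
  assumes "add_subgroup Y"
  shows "x +o Y = x' +o Y \<longleftrightarrow> x - x' \<in> Y"
proof
  assume "x +o Y = x' +o Y"
  moreover have "x \<in> x +o Y"
    using set_plus_intro2[OF add_subgroup_0[OF assms], of x] by simp
  ultimately show "x - x' \<in> Y" by (simp add: set_plus_imp_minus)
next
  assume "x - x' \<in> Y"
  then have "z - x \<in> Y \<longleftrightarrow> z - x' \<in> Y" for z
    using add_subgroup_add[OF assms, of "z - x" "x - x'"] add_subgroup_diff[OF assms, of "z - x'" "x - x'"]
    by auto
  then show "x +o Y = x' +o Y" by (auto simp: set_minus_plus[symmetric])
qed

lemma modular_law:
  assumes "add_subgroup A" "U \<subseteq> A"
  shows "A \<inter> (U + V) = U + (A \<inter> V)"
proof (intro set_eqI iffI)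
  fix z assume "z \<in> A \<inter> (U + V)"
  then obtain u v where "u \<in> U" "v \<in> V" "z = u + v" "z \<in> A" by (auto elim!: set_plus_elim)
  moreover have "v \<in> A"
    using add_subgroup_diff[OF assms(1), of z u] calculation assms(2) by auto
  ultimately show "z \<in> U + (A \<inter> V)" by auto
next
  fix z assume "z \<in> U + (A \<inter> V)"
  then show "z \<in> A \<inter> (U + V)"
    using add_subgroup_add[OF assms(1)] assms(2) by (auto elim!: set_plus_elim)
qed

lemma card_cosets_set_plus:
  assumes "add_subgroup A" "add_subgroup B"
  shows "card (cosets (A + B) B) = card (cosets A (A \<inter> B))"
proof -
  have "(a + b) +o B = a +o B" if "b \<in> B" for a b
    using that by (simp add: coset_eq_iff[OF assms(2)])
  moreover have "A \<subseteq> A + B"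
    using set_zero_plus2[OF add_subgroup_0[OF assms(2)], of A] by (simp add: add.commute)
  ultimately have "cosets (A + B) B = cosets A B"
    unfolding cosets_def by (force elim!: set_plus_elim)
  moreover have "card (cosets A B) = card (cosets A (A \<inter> B))"
    unfolding cosets_def
    by (rule card_image_eq_if_same_kernel)
      (use add_subgroup_diff[OF assms(1)] in \<open>auto simp: coset_eq_iff assms add_subgroup_Int\<close>)
  ultimately show ?thesis by simp
qed

lemma coset_set_plus_absorb:
  assumes "add_subgroup Y" "add_subgroup Z" "Z \<subseteq> Y"
  shows "(x +o Z) + Y = x +o Y"
proof -
  have "Z + Y = Y" using set_plus_absorb[OF assms] by (simp add: add.commute)
  then show ?thesis by (simp add: set_plus_rearrange3)
qed

lemma inj_elt_set_plus: "inj ((+o) (a::'v::ab_group_add))"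
  by (rule inj_on_inverseI[where g = "(+o) (- a)"]) (simp add: set_plus_rearrange2)

lemma finite_cosets_tower:
  assumes "add_subgroup Y" "add_subgroup Z" "Z \<subseteq> Y" "Y \<subseteq> X" "finite (cosets X Z)"
  shows "finite (cosets X Y)" "finite (cosets Y Z)"
proof -
  have "cosets X Y = (\<lambda>c. c + Y) ` cosets X Z"
    by (simp add: cosets_def image_image coset_set_plus_absorb[OF assms(1-3)])
  then show "finite (cosets X Y)" using assms(5) by simp
  show "finite (cosets Y Z)"
    using assms(4,5) unfolding cosets_def by (meson finite_subset image_mono)
qed

lemma card_cosets_tower:
  assumes "add_subgroup X" "add_subgroup Y" "add_subgroup Z" "Z \<subseteq> Y" "Y \<subseteq> X"
    and "finite (cosets X Z)"
  shows "card (cosets X Z) = card (cosets X Y) * card (cosets Y Z)"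
proof -
  note fin = finite_cosets_tower[OF assms(2-6)]
  (* Count the cosets of Z by the coset c + Y of Y containing them; each fibre is a translate
     of cosets Y Z. *)
  have \<pi>: "(x +o Z) + Y = x +o Y" for x
    by (rule coset_set_plus_absorb[OF assms(2-4)])
  have fibre: "{c \<in> cosets X Z. c + Y = D} = (+o) a ` cosets Y Z" if "a \<in> X" "D = a +o Y" for a D
  proof -
    have "x +o Y = a +o Y \<longleftrightarrow> x \<in> a +o Y" for x
      by (simp add: coset_eq_iff[OF assms(2)] set_minus_plus)
    moreover have "a +o Y \<subseteq> X"
      using \<open>a \<in> X\<close> assms(5) add_subgroup_add[OF assms(1)] by (auto simp: elt_set_plus_def)
    ultimately have "{x \<in> X. x +o Y = a +o Y} = a +o Y"
      by blast
    moreover have "{c \<in> cosets X Z. c + Y = D} = (\<lambda>x. x +o Z) ` {x \<in> X. (x +o Z) + Y = D}"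
      unfolding cosets_def by blast
    ultimately have "{c \<in> cosets X Z. c + Y = D} = (\<lambda>x. x +o Z) ` (a +o Y)"
      by (simp add: \<pi> that(2))
    also have "a +o Y = (+) a ` Y"
      by (auto simp: elt_set_plus_def)
    finally show ?thesis
      by (simp add: cosets_def image_image set_plus_rearrange2)
  qed
  have "card (cosets X Z) = (\<Sum>D\<in>cosets X Y. card {c \<in> cosets X Z. c + Y = D})"
  proof -
    have "(\<lambda>c. c + Y) ` cosets X Z \<subseteq> cosets X Y"
      by (auto simp: cosets_def \<pi>)
    from sum_fun_comp[OF assms(6) fin(1) this, of "\<lambda>_. 1::nat"] show ?thesis by simp
  qed
  also have "\<dots> = (\<Sum>D\<in>cosets X Y. card (cosets Y Z))"
  proof (rule sum.cong[OF refl])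
    fix D assume "D \<in> cosets X Y"
    then obtain a where "a \<in> X" "D = a +o Y" by (auto simp: cosets_def)
    then show "card {c \<in> cosets X Z. c + Y = D} = card (cosets Y Z)"
      by (simp add: fibre card_image inj_on_subset[OF inj_elt_set_plus])
  qed
  finally show ?thesis by simp
qed

lemma cosets_self:
  assumes "add_subgroup X"
  shows "cosets X X = {X}"
proof -
  have "x +o X = X" if "x \<in> X" for x
    using that coset_eq_iff[OF assms, of x 0] by simp
  then show ?thesis
    using add_subgroup_0[OF assms] by (auto simp: cosets_def)
qed

definition const_smult :: "'a::field \<Rightarrow> ('i \<Rightarrow> 'a fls) \<Rightarrow> 'i \<Rightarrow> 'a fls" where
  "const_smult c x = (\<lambda>k. fls_const c * x k)"

definition const_closed :: "('i \<Rightarrow> 'a::field fls) set \<Rightarrow> bool" where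
  "const_closed Y \<longleftrightarrow> (\<forall>c. \<forall>x\<in>Y. const_smult c x \<in> Y)"

lemma const_smult_add_left: "const_smult (c + c') x = const_smult c x + const_smult c' x"
  by (simp add: const_smult_def fun_eq_iff fls_plus_const[symmetric] distrib_right)

lemma const_smult_add_right: "const_smult c (x + y) = const_smult c x + const_smult c y"
  by (simp add: const_smult_def fun_eq_iff distrib_left)

lemma const_smult_diff_left: "const_smult (c - c') x = const_smult c x - const_smult c' x"
  by (simp add: const_smult_def fun_eq_iff fls_minus_const[symmetric] left_diff_distrib)

lemma const_smult_minus: "const_smult (- c) x = - const_smult c x"
  by (simp add: const_smult_def fun_eq_iff fls_const_uminus)

lemma const_smult_const_smult: "const_smult c (const_smult c' x) = const_smult (c * c') x"
  by (simp add: const_smult_def fun_eq_iff fls_const_mult_const mult.assoc)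

lemma const_smult_0: "const_smult 0 x = 0"
  by (simp add: const_smult_def fun_eq_iff)

lemma const_smult_1: "const_smult 1 x = x"
  by (simp add: const_smult_def fun_eq_iff)

lemma const_closed_set_plus: "const_closed A \<Longrightarrow> const_closed B \<Longrightarrow> const_closed (A + B)"
  unfolding const_closed_def by (auto simp: const_smult_add_right intro!: set_plus_intro elim!: set_plus_elim)

lemma one_less_card_field: "1 < card (UNIV :: 'a::{field,finite} set)"
proof -
  have "card {0::'a, 1} \<le> card (UNIV :: 'a set)" by (rule card_mono) auto
  then show ?thesis by simp
qed

definition const_span :: "('i \<Rightarrow> 'a::field fls) \<Rightarrow> ('i \<Rightarrow> 'a fls) set" where
  "const_span x = range (\<lambda>c. const_smult c x)"

lemma add_subgroup_const_span: "add_subgroup (const_span x)"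
  unfolding add_subgroup_def const_span_def
  by (auto simp: const_smult_add_left[symmetric] const_smult_minus[symmetric])
    (metis const_smult_0 rangeI)

lemma const_closed_const_span: "const_closed (const_span x)"
  unfolding const_closed_def const_span_def by (auto simp: const_smult_const_smult)

lemma card_cosets_const_span:
  fixes Y :: "('i \<Rightarrow> 'a::{field,finite} fls) set"
  assumes "add_subgroup Y" "const_closed Y" "x \<notin> Y"
  shows "card (cosets (Y + const_span x) Y) = card (UNIV :: 'a set)"
proof -
  have "(y + const_smult c x) +o Y = const_smult c x +o Y" if "y \<in> Y" for y c
    using that by (simp add: coset_eq_iff[OF assms(1)])
  moreover have "const_smult c x \<in> Y + const_span x" for c
    using set_plus_intro[OF add_subgroup_0[OF assms(1)], of "const_smult c x" "const_span x"]
    by (simp add: const_span_def)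
  ultimately have "cosets (Y + const_span x) Y = range (\<lambda>c. const_smult c x +o Y)"
    unfolding cosets_def by (auto simp: const_span_def elim!: set_plus_elim)
  moreover have "inj (\<lambda>c. const_smult c x +o Y)"
  proof (rule injI)
    fix c c' assume "const_smult c x +o Y = const_smult c' x +o Y"
    then have "const_smult (c - c') x \<in> Y"
      by (simp add: coset_eq_iff[OF assms(1)] const_smult_diff_left)
    then have "c \<noteq> c' \<Longrightarrow> const_smult (inverse (c - c')) (const_smult (c - c') x) \<in> Y"
      using assms(2) unfolding const_closed_def by blast
    then show "c = c'"
      using assms(3) by (auto simp: const_smult_const_smult const_smult_1)
  qed
  ultimately show ?thesis
    by (simp add: card_image)
qed

lemma card_cosets_power:
  fixes X Y :: "('i \<Rightarrow> 'a::{field,finite} fls) set"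
  assumes "add_subgroup X" "add_subgroup Y" "const_closed X" "const_closed Y" "Y \<subseteq> X"
    and "finite (cosets X Y)"
  shows "\<exists>e. card (cosets X Y) = card (UNIV :: 'a set) ^ e"
  using assms(2,4-6)
proof (induction "card (cosets X Y)" arbitrary: Y rule: less_induct)
  case less
  show ?case
  proof (cases "X \<subseteq> Y")
    case True
    then show ?thesis
      using less.prems(3) cosets_self[OF assms(1)] by (intro exI[of _ 0]) auto
  next
    case False
    then obtain x where x: "x \<in> X" "x \<notin> Y" by auto
    define Y' where "Y' = Y + const_span x"
    have "const_span x \<subseteq> X"
      using assms(3) x(1) unfolding const_closed_def const_span_def by auto
    then have Y': "add_subgroup Y'" "const_closed Y'" "Y \<subseteq> Y'" "Y' \<subseteq> X"
      unfolding Y'_def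
      using add_subgroup_set_plus[OF less.prems(1) add_subgroup_const_span]
        const_closed_set_plus[OF less.prems(2) const_closed_const_span]
        set_zero_plus2[OF add_subgroup_0[OF add_subgroup_const_span], of Y]
        set_plus_subset_add_subgroup[OF assms(1) less.prems(3)]
      by (simp_all add: add.commute[of _ Y])
    have tower: "card (cosets X Y) = card (cosets X Y') * card (UNIV :: 'a set)"
      using card_cosets_tower[OF assms(1) Y'(1) less.prems(1) Y'(3,4) less.prems(4)]
        card_cosets_const_span[OF less.prems(1,2) x(2)] by (simp add: Y'_def)
    moreover have "0 < card (cosets X Y)"
      using less.prems(4) add_subgroup_0[OF assms(1)] by (auto simp: card_gt_0_iff cosets_def)
    ultimately have "card (cosets X Y') < card (cosets X Y)"
      using one_less_card_field[where 'a='a] by simp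
    then obtain e where "card (cosets X Y') = card (UNIV :: 'a set) ^ e"
      using less.hyps Y' finite_cosets_tower(1)[OF Y'(1) less.prems(1) Y'(3,4) less.prems(4)] by blast
    then show ?thesis
      using tower by (intro exI[of _ "Suc e"]) simp
  qed
qed

section \<open>Monomial lattices\<close>

definition monomial_lattice :: "nat \<Rightarrow> (nat \<Rightarrow> int) \<Rightarrow> (nat \<Rightarrow> 'a::field fls) set" where
  "monomial_lattice d h = {x \<in> vecs d. \<forall>k<d. \<forall>m<h k. fls_nth (x k) m = 0}"

lemma std_lat_eq_monomial_lattice: "std_lat d N = monomial_lattice d (\<lambda>_. N)"
  by (simp add: std_lat_def monomial_lattice_def)

lemma monomial_lattice_mono:
  "(\<And>k. k < d \<Longrightarrow> h' k \<le> h k) \<Longrightarrow> monomial_lattice d h \<subseteq> monomial_lattice d h'"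
  unfolding monomial_lattice_def by fastforce

lemma std_lat_antimono: "N' \<le> N \<Longrightarrow> std_lat d N \<subseteq> std_lat d N'"
  unfolding std_lat_eq_monomial_lattice by (rule monomial_lattice_mono) simp

lemma add_subgroup_monomial_lattice: "add_subgroup (monomial_lattice d h)"
  unfolding add_subgroup_def monomial_lattice_def vecs_def by auto

lemma monomial_lattice_Int:
  "monomial_lattice d h \<inter> monomial_lattice d h' = monomial_lattice d (\<lambda>k. max (h k) (h' k))"
  unfolding monomial_lattice_def by (auto simp: less_max_iff_disj)

lemma monomial_lattice_set_plus:
  "monomial_lattice d h + monomial_lattice d h' = monomial_lattice d (\<lambda>k. min (h k) (h' k))"
proof (intro set_eqI iffI)
  fix z assume "z \<in> monomial_lattice d h + monomial_lattice d h'"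
  then show "z \<in> monomial_lattice d (\<lambda>k. min (h k) (h' k))"
    unfolding monomial_lattice_def vecs_def by (auto elim!: set_plus_elim)
next
  fix z :: "nat \<Rightarrow> 'a fls" assume z: "z \<in> monomial_lattice d (\<lambda>k. min (h k) (h' k))"
  define x where "x k = (if h k \<le> h' k then z k else 0)" for k
  have "x \<in> monomial_lattice d h" "z - x \<in> monomial_lattice d h'"
    using z unfolding x_def monomial_lattice_def vecs_def by auto
  then show "z \<in> monomial_lattice d h + monomial_lattice d h'"
    using set_plus_intro by fastforce
qed

lemma monomial_lattice_shift:
  "(\<lambda>x k. fls_X_inv * x k) ` monomial_lattice d h = monomial_lattice d (\<lambda>k. h k - 1)"
proof (intro set_eqI iffI)
  fix y :: "nat \<Rightarrow> 'a fls" assume "y \<in> (\<lambda>x k. fls_X_inv * x k) ` monomial_lattice d h"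
  then show "y \<in> monomial_lattice d (\<lambda>k. h k - 1)"
    unfolding monomial_lattice_def vecs_def by (auto simp: fls_X_inv_times_conv_shift)
next
  fix y :: "nat \<Rightarrow> 'a fls" assume y: "y \<in> monomial_lattice d (\<lambda>k. h k - 1)"
  have "(\<lambda>k. fls_X * y k) \<in> monomial_lattice d h"
    using y unfolding monomial_lattice_def vecs_def by (auto simp: fls_X_times_conv_shift)
  then have "(\<lambda>k. fls_X_inv * (fls_X * y k)) \<in> (\<lambda>x k. fls_X_inv * x k) ` monomial_lattice d h"
    by (rule imageI)
  moreover have "(\<lambda>k. fls_X_inv * (fls_X * y k)) = y"
    by (simp add: fls_eq_iff fun_eq_iff fls_X_inv_times_conv_shift fls_X_times_conv_shift)
  ultimately show "y \<in> (\<lambda>x k. fls_X_inv * x k) ` monomial_lattice d h"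
    by simp
qed

lemma intO_mult_monomial_lattice:
  assumes "c \<in> intO" "x \<in> monomial_lattice d h"
  shows "(\<lambda>k. c * x k) \<in> monomial_lattice d h"
proof -
  have "fls_nth (c * x k) m = 0" if "k < d" "m < h k" for k m
  proof (cases "c = 0 \<or> x k = 0")
    case False
    then have "0 \<le> fls_subdegree c" "h k \<le> fls_subdegree (x k)"
      using assms that unfolding intO_def monomial_lattice_def
      by (auto intro: fls_subdegree_ge0I fls_subdegree_geI)
    then show ?thesis using False that by (intro fls_times_nth_eq0) auto
  qed auto
  then show ?thesis using assms(2) unfolding monomial_lattice_def vecs_def by auto
qed

lemma is_latticeI:
  assumes "add_subgroup L" "\<And>c x. c \<in> intO \<Longrightarrow> x \<in> L \<Longrightarrow> (\<lambda>k. c * x k) \<in> L"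
    and "std_lat d N \<subseteq> L" "L \<subseteq> std_lat d (- N)"
  shows "is_lattice d L"
proof -
  have "L \<subseteq> vecs d" using assms(4) unfolding std_lat_def by blast
  moreover have "vadd x y \<in> L" if "x \<in> L" "y \<in> L" for x y
    using add_subgroup_add[OF assms(1) that] by (simp add: vadd_def plus_fun_def)
  moreover have "(\<lambda>k. 0) \<in> L"
    using add_subgroup_0[OF assms(1)] by (simp add: zero_fun_def)
  ultimately show ?thesis
    using assms(2-4) unfolding is_lattice_def by blast
qed

lemma is_lattice_monomial_lattice: "is_lattice d (monomial_lattice d h)"
proof (rule is_latticeI)
  define N where "N = (\<Sum>k<d. \<bar>h k\<bar>)"
  have "\<bar>h k\<bar> \<le> N" if "k < d" for k
    unfolding N_def using that by (intro member_le_sum) auto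
  then have "h k \<le> N" "- N \<le> h k" if "k < d" for k
    using that by fastforce+
  then show "std_lat d N \<subseteq> monomial_lattice d h" "monomial_lattice d h \<subseteq> std_lat d (- N)"
    unfolding std_lat_eq_monomial_lattice by (auto intro!: monomial_lattice_mono)
qed (simp_all add: add_subgroup_monomial_lattice intO_mult_monomial_lattice)

lemma card_cosets_monomial_lattice:
  assumes "\<And>k. k < d \<Longrightarrow> h k \<le> h' k"
  shows "card (cosets (monomial_lattice d h) (monomial_lattice d h' :: (nat \<Rightarrow> 'a::{field,finite} fls) set))
    = card (UNIV :: 'a set) ^ (\<Sum>k<d. nat (h' k - h k))"
proof -
  define D where "D = Sigma {..<d} (\<lambda>k. {h k..<h' k})"
  define coeffs :: "(nat \<Rightarrow> 'a fls) \<Rightarrow> nat \<times> int \<Rightarrow> 'a"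
    where "coeffs x = restrict (\<lambda>(k, m). fls_nth (x k) m) D" for x
  have "x +o monomial_lattice d h' = x' +o monomial_lattice d h' \<longleftrightarrow> coeffs x = coeffs x'"
    if "x \<in> monomial_lattice d h" "x' \<in> monomial_lattice d h" for x x'
  proof -
    have "fls_nth (x k) m = fls_nth (x' k) m" if "k < d" "m < h k" for k m
      using that \<open>x \<in> _\<close> \<open>x' \<in> _\<close> unfolding monomial_lattice_def by simp
    then have low_coeffs_agree: "(\<forall>k<d. \<forall>m<h' k. fls_nth (x k) m = fls_nth (x' k) m) \<longleftrightarrow>
        (\<forall>k<d. \<forall>m. h k \<le> m \<and> m < h' k \<longrightarrow> fls_nth (x k) m = fls_nth (x' k) m)"
      by (auto simp: not_le[symmetric])
    have "x +o monomial_lattice d h' = x' +o monomial_lattice d h' \<longleftrightarrow> x - x' \<in> monomial_lattice d h'"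
      by (rule coset_eq_iff[OF add_subgroup_monomial_lattice])
    also have "\<dots> \<longleftrightarrow> (\<forall>k<d. \<forall>m<h' k. fls_nth (x k) m = fls_nth (x' k) m)"
      using that by (auto simp: monomial_lattice_def vecs_def)
    also have "\<dots> \<longleftrightarrow> coeffs x = coeffs x'"
      unfolding low_coeffs_agree by (auto simp: coeffs_def D_def fun_eq_iff)
    finally show ?thesis .
  qed
  then have "card (cosets (monomial_lattice d h) (monomial_lattice d h' :: (nat \<Rightarrow> 'a fls) set))
      = card (coeffs ` monomial_lattice d h)"
    unfolding cosets_def by (rule card_image_eq_if_same_kernel)
  also have "coeffs ` monomial_lattice d h = PiE D (\<lambda>_. UNIV)"
  proof (intro set_eqI iffI)
    fix t assume "t \<in> PiE D (\<lambda>_. (UNIV :: 'a set))"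
    define x where "x k = (if k < d then Abs_fls (\<lambda>m. if (k, m) \<in> D then t (k, m) else 0) else 0)" for k
    have x_nth: "fls_nth (x k) m = (if (k, m) \<in> D then t (k, m) else 0)" if "k < d" for k m
    proof -
      have "\<forall>m < h k. (if (k, m) \<in> D then t (k, m) else 0) = 0" by (simp add: D_def)
      then show ?thesis
        unfolding x_def using that by (simp only: nth_Abs_fls_lower_bound if_True)
    qed
    then have "x \<in> monomial_lattice d h"
      by (auto simp: monomial_lattice_def vecs_def x_def D_def)
    moreover have "coeffs x = t"
      using \<open>t \<in> PiE D _\<close> x_nth
      by (auto simp: coeffs_def fun_eq_iff D_def PiE_def extensional_def)
    ultimately show "t \<in> coeffs ` monomial_lattice d h" by blast
  qed (auto simp: coeffs_def)
  also have "card (PiE D (\<lambda>_. UNIV :: 'a set)) = card (UNIV :: 'a set) ^ (\<Sum>k<d. nat (h' k - h k))"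
    by (simp add: card_PiE D_def card_SigmaI)
  finally show ?thesis .
qed

section \<open>The index of one lattice in another\<close>

lemma vadd_eq_plus: "vadd x y = x + y"
  by (simp add: vadd_def fun_eq_iff)

lemma lattice_add_subgroup:
  assumes "is_lattice d L"
  shows "add_subgroup L"
proof -
  have "(- 1 :: 'a fls) \<in> intO" by (simp add: intO_def)
  moreover have "(\<lambda>k. (- 1) * x k) = - x" for x :: "nat \<Rightarrow> 'a fls" by (simp add: fun_eq_iff)
  ultimately show ?thesis
    using assms unfolding is_lattice_def add_subgroup_def vadd_eq_plus zero_fun_def by metis
qed

lemma lattice_const_closed: "is_lattice d L \<Longrightarrow> const_closed L"
  unfolding is_lattice_def const_closed_def const_smult_def by (simp add: intO_def)

lemma lattices_common_boundsE:
  assumes "is_lattice d X" "is_lattice d Y"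
  obtains N where "0 \<le> N" "std_lat d N \<subseteq> X \<inter> Y" "X \<union> Y \<subseteq> std_lat d (- N)"
proof -
  obtain N1 N2 where N1: "std_lat d N1 \<subseteq> X" "X \<subseteq> std_lat d (- N1)"
    and N2: "std_lat d N2 \<subseteq> Y" "Y \<subseteq> std_lat d (- N2)"
    using assms unfolding is_lattice_def by blast
  define N where "N = max (max N1 N2) 0"
  have "std_lat d N \<subseteq> std_lat d N1" "std_lat d N \<subseteq> std_lat d N2"
    "std_lat d (- N1) \<subseteq> std_lat d (- N)" "std_lat d (- N2) \<subseteq> std_lat d (- N)"
    unfolding N_def by (rule std_lat_antimono, simp)+
  with N1 N2 have "std_lat d N \<subseteq> X \<inter> Y" "X \<union> Y \<subseteq> std_lat d (- N)"
    by (meson Int_greatest Un_least order_trans)+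
  then show ?thesis
    by (intro that[of N]) (simp_all add: N_def)
qed

lemma is_lattice_Int:
  assumes "is_lattice d X" "is_lattice d Y"
  shows "is_lattice d (X \<inter> Y)"
proof -
  obtain N where N: "std_lat d N \<subseteq> X \<inter> Y" "X \<union> Y \<subseteq> std_lat d (- N)"
    using lattices_common_boundsE[OF assms] .
  show ?thesis
  proof (rule is_latticeI[where N = N])
    show "add_subgroup (X \<inter> Y)"
      by (rule add_subgroup_Int[OF assms[THEN lattice_add_subgroup]])
    show "(\<lambda>k. c * x k) \<in> X \<inter> Y" if "c \<in> intO" "x \<in> X \<inter> Y" for c x
      using assms that unfolding is_lattice_def by blast
    show "X \<inter> Y \<subseteq> std_lat d (- N)"
      using N(2) by blast
  qed (rule N(1))
qed

lemma is_lattice_set_plus: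
  assumes "is_lattice d X" "is_lattice d Y"
  shows "is_lattice d (X + Y)"
proof -
  note sub = assms[THEN lattice_add_subgroup]
  obtain N where N: "std_lat d N \<subseteq> X \<inter> Y" "X \<union> Y \<subseteq> std_lat d (- N)"
    using lattices_common_boundsE[OF assms] .
  have "X \<subseteq> X + Y"
    using set_zero_plus2[OF add_subgroup_0[OF sub(2)], of X] by (simp add: add.commute)
  then have "std_lat d N \<subseteq> X + Y"
    using N(1) by blast
  moreover have "X + Y \<subseteq> std_lat d (- N)"
    using set_plus_subset_add_subgroup[OF add_subgroup_monomial_lattice, of X d _ Y] N(2)
    by (simp add: std_lat_eq_monomial_lattice)
  moreover have "(\<lambda>k. c * z k) \<in> X + Y" if "c \<in> intO" "z \<in> X + Y" for c z
  proof -
    obtain x y where "x \<in> X" "y \<in> Y" "z = x + y" using \<open>z \<in> X + Y\<close> by (auto elim!: set_plus_elim)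
    moreover have "(\<lambda>k. c * (x + y) k) = (\<lambda>k. c * x k) + (\<lambda>k. c * y k)"
      by (simp add: fun_eq_iff distrib_left)
    ultimately show ?thesis
      using assms \<open>c \<in> intO\<close> unfolding is_lattice_def by (auto intro: set_plus_intro)
  qed
  ultimately show ?thesis
    using add_subgroup_set_plus[OF sub] by (intro is_latticeI)
qed

lemma qdim_unique:
  fixes X Y :: "(nat \<Rightarrow> 'a::{field,finite} fls) set"
  assumes "card (cosets X Y) = card (UNIV :: 'a set) ^ e"
  shows "qdim X Y = e"
proof -
  have "(\<lambda>x. vadd x ` Y) ` X = cosets X Y"
    by (auto simp: cosets_def vadd_eq_plus elt_set_plus_def image_def)
  then show ?thesis
    unfolding qdim_def using assms one_less_card_field[where 'a='a]
    by (auto simp: power_inject_exp)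
qed

lemma finite_cosets_lattice:
  fixes X Y :: "(nat \<Rightarrow> 'a::{field,finite} fls) set"
  assumes "is_lattice d X" "is_lattice d Y" "Y \<subseteq> X"
  shows "finite (cosets X Y)"
proof -
  obtain N where "0 \<le> N" "std_lat d N \<subseteq> X \<inter> Y" "X \<union> Y \<subseteq> std_lat d (- N)"
    using lattices_common_boundsE[OF assms(1,2)] .
  then have N: "0 \<le> N" "std_lat d N \<subseteq> Y" "X \<subseteq> std_lat d (- N)"
    by auto
  have "card (cosets (std_lat d (- N)) (std_lat d N :: (nat \<Rightarrow> 'a fls) set)) > 0"
    unfolding std_lat_eq_monomial_lattice
    using one_less_card_field[where 'a='a] N(1)
    by (subst card_cosets_monomial_lattice) simp_all
  then have "finite (cosets (std_lat d (- N)) (std_lat d N :: (nat \<Rightarrow> 'a fls) set))"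
    by (rule card_ge_0_finite)
  moreover have "cosets X (std_lat d N) \<subseteq> cosets (std_lat d (- N)) (std_lat d N)"
    unfolding cosets_def using N(3) by (rule image_mono)
  ultimately have "finite (cosets X (std_lat d N))"
    by (rule finite_subset[rotated])
  then show ?thesis
    using finite_cosets_tower(1)[OF lattice_add_subgroup[OF assms(2)] _ N(2) assms(3)]
    by (simp add: std_lat_eq_monomial_lattice add_subgroup_monomial_lattice)
qed

lemma card_cosets_lattice:
  fixes X Y :: "(nat \<Rightarrow> 'a::{field,finite} fls) set"
  assumes "is_lattice d X" "is_lattice d Y" "Y \<subseteq> X"
  shows "card (cosets X Y) = card (UNIV :: 'a set) ^ qdim X Y"
  using card_cosets_power[OF assms(1,2)[THEN lattice_add_subgroup] assms(1,2)[THEN lattice_const_closed]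
      assms(3) finite_cosets_lattice[OF assms]]
  by (auto dest: qdim_unique)

lemma qdim_self: "add_subgroup X \<Longrightarrow> qdim X X = 0"
  by (rule qdim_unique) (simp add: cosets_self)

lemma qdim_tower:
  fixes X Y Z :: "(nat \<Rightarrow> 'a::{field,finite} fls) set"
  assumes "is_lattice d X" "is_lattice d Y" "is_lattice d Z" "Z \<subseteq> Y" "Y \<subseteq> X"
  shows "qdim X Z = qdim X Y + qdim Y Z"
proof (rule qdim_unique)
  have "card (cosets X Z) = card (cosets X Y) * card (cosets Y Z)"
    using card_cosets_tower[OF assms(1-3)[THEN lattice_add_subgroup] assms(4,5)]
      finite_cosets_lattice[OF assms(1,3)] assms(4,5) by blast
  then show "card (cosets X Z) = card (UNIV :: 'a set) ^ (qdim X Y + qdim Y Z)"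
    by (simp add: card_cosets_lattice[OF assms(1,2,5)] card_cosets_lattice[OF assms(2,3,4)] power_add)
qed

lemma qdim_set_plus:
  fixes A B :: "(nat \<Rightarrow> 'a::{field,finite} fls) set"
  assumes "is_lattice d A" "is_lattice d B"
  shows "qdim (A + B) B = qdim A (A \<inter> B)"
proof (rule qdim_unique)
  have "B \<subseteq> A + B"
    using set_zero_plus2[OF add_subgroup_0[OF lattice_add_subgroup[OF assms(1)]]] .
  then show "card (cosets (A + B) B) = card (UNIV :: 'a set) ^ qdim A (A \<inter> B)"
    using card_cosets_set_plus[OF assms[THEN lattice_add_subgroup]]
    by (simp add: card_cosets_lattice[OF assms(1) is_lattice_Int[OF assms]])
qed

section \<open>Periodic lattice chains and the numbers \<open>\<epsilon>\<^sub>i\<close>\<close>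

definition mult_X_inv :: "(nat \<Rightarrow> 'a::field fls) \<Rightarrow> nat \<Rightarrow> 'a fls" where
  "mult_X_inv x = (\<lambda>k. fls_X_inv * x k)"

lemma inj_mult_X_inv: "inj mult_X_inv"
  by (rule injI) (simp add: mult_X_inv_def fun_eq_iff)

lemma mult_X_inv_pow_std_lat:
  "(mult_X_inv ^^ p) ` (std_lat d N :: (nat \<Rightarrow> 'a::field fls) set) = std_lat d (N - int p)"
proof (induction p)
  case (Suc p)
  have "(mult_X_inv ^^ Suc p) ` (std_lat d N :: (nat \<Rightarrow> 'a fls) set)
      = mult_X_inv ` (mult_X_inv ^^ p) ` std_lat d N"
    by (simp add: image_image)
  also have "\<dots> = mult_X_inv ` std_lat d (N - int p)"
    by (simp only: Suc.IH)
  also have "\<dots> = std_lat d (N - int (Suc p))"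
    unfolding std_lat_eq_monomial_lattice mult_X_inv_def[abs_def] monomial_lattice_shift
    by (simp add: algebra_simps)
  finally show ?case .
qed simp

lemma lchain_lattice: "lchain n d L \<Longrightarrow> is_lattice d (L i)"
  unfolding lchain_def by simp

lemma int_chain_mono:
  assumes "\<And>t. M (t - 1) \<subseteq> M t" "a \<le> (b::int)"
  shows "M a \<subseteq> M b"
  using assms(2)
proof (induction b rule: int_ge_induct)
  case (step b)
  then show ?case using assms(1)[of "b + 1"] by simp
qed simp

lemma lchain_mono:
  assumes "lchain n d L" "a \<le> b"
  shows "L a \<subseteq> L b"
  using int_chain_mono[of L a b] assms unfolding lchain_def by blast

lemma lchain_shift:
  assumes "lchain n d L"
  shows "L (i + int p * int n) = (mult_X_inv ^^ p) ` L i"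
proof (induction p)
  case (Suc p)
  have "L (i + int (Suc p) * int n) = L ((i + int p * int n) + int n)"
    by (simp add: algebra_simps)
  also have "\<dots> = mult_X_inv ` L (i + int p * int n)"
    using assms unfolding lchain_def mult_X_inv_def[abs_def] by blast
  also have "\<dots> = mult_X_inv ` (mult_X_inv ^^ p) ` L i"
    by (simp only: Suc.IH)
  finally show ?case
    by (simp add: image_image)
qed simp

lemma lchains_comparable:
  assumes "lchain n d L" "lchain n d L'"
  obtains p :: nat where "L (i - int p * int n) \<subseteq> L' i" "L i \<subseteq> L' (i + int p * int n)"
proof -
  obtain N1 where N1: "L i \<subseteq> std_lat d (- N1)"
    using lchain_lattice[OF assms(1)] unfolding is_lattice_def by blast
  obtain N2 where N2: "std_lat d N2 \<subseteq> L' i"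
    using lchain_lattice[OF assms(2)] unfolding is_lattice_def by blast
  define p where "p = nat (N1 + N2)"
  have "std_lat d (- N1) \<subseteq> std_lat d (N2 - int p)"
    by (rule std_lat_antimono) (simp add: p_def)
  also have "\<dots> = (mult_X_inv ^^ p) ` std_lat d N2"
    by (rule mult_X_inv_pow_std_lat[symmetric])
  also have "\<dots> \<subseteq> L' (i + int p * int n)"
    unfolding lchain_shift[OF assms(2)] using N2 by (rule image_mono)
  finally have upper: "L i \<subseteq> L' (i + int p * int n)"
    using N1 by blast
  have "(mult_X_inv ^^ p) ` L (i - int p * int n) \<subseteq> (mult_X_inv ^^ p) ` L' i"
    using upper lchain_shift[OF assms(1), of "i - int p * int n" p] lchain_shift[OF assms(2), of i p]
    by simp
  then have "L (i - int p * int n) \<subseteq> L' i"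
    by (simp add: inj_image_subset_iff[OF inj_fn[OF inj_mult_X_inv]])
  then show ?thesis using upper by (rule that)
qed

lemma relpos_eq_qdim:
  "relpos L L' r s = qdim (L r \<inter> L' s) (L (r - 1) \<inter> L' s + L r \<inter> L' (s - 1))"
proof -
  have "msum X Y = X + Y" for X Y :: "(nat \<Rightarrow> 'a fls) set"
    by (auto simp: msum_def set_plus_def vadd_eq_plus)
  then show ?thesis unfolding relpos_def by simp
qed

lemma relpos_swap: "relpos L' L s r = relpos L L' r s"
  by (simp add: relpos_eq_qdim Int_commute add.commute)

lemma relpos_eq_0:
  assumes "lchain n d L" "lchain n d L'" "L r \<inter> L' s \<subseteq> L' (s - 1)"
  shows "relpos L L' r s = 0"
proof -
  have sub: "add_subgroup (L (r - 1) \<inter> L' s)" "add_subgroup (L r \<inter> L' s)"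
    using assms(1,2)[THEN lchain_lattice] by (blast intro: add_subgroup_Int lattice_add_subgroup)+
  have "L r \<inter> L' (s - 1) = L r \<inter> L' s"
    using assms(3) lchain_mono[OF assms(2), of "s - 1" s] by auto
  moreover have "L (r - 1) \<inter> L' s \<subseteq> L r \<inter> L' s"
    using lchain_mono[OF assms(1), of "r - 1" r] by auto
  ultimately have "L (r - 1) \<inter> L' s + L r \<inter> L' (s - 1) = L r \<inter> L' s"
    using set_plus_absorb[OF sub(2,1)] by (simp add: add.commute)
  then show ?thesis
    by (simp add: relpos_eq_qdim qdim_self sub(2))
qed

lemma qdim_telescope:
  fixes M :: "int \<Rightarrow> (nat \<Rightarrow> 'a::{field,finite} fls) set"
  assumes "\<And>t. is_lattice d (M t)" "\<And>t. M (t - 1) \<subseteq> M t" "a \<le> b"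
  shows "qdim (M b) (M a) = (\<Sum>t\<in>{a<..b}. qdim (M t) (M (t - 1)))"
  using assms(3)
proof (induction b rule: int_ge_induct)
  case base
  then show ?case using qdim_self[OF lattice_add_subgroup[OF assms(1)]] by simp
next
  case (step b)
  have "qdim (M (b + 1)) (M a) = qdim (M (b + 1)) (M b) + qdim (M b) (M a)"
    using assms(2)[of "b + 1"] int_chain_mono[where M = M, OF assms(2) step.hyps]
    by (intro qdim_tower[OF assms(1) assms(1) assms(1)]) auto
  moreover have "{a<..b + 1} = insert (b + 1) {a<..b}"
    using step.hyps by auto
  ultimately show ?case
    using step.IH by simp
qed

lemma qdim_row_step:
  fixes L L' :: "int \<Rightarrow> (nat \<Rightarrow> 'a::{field,finite} fls) set"
  assumes "lchain n d L" "lchain n d L'" "t \<le> i"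
  shows "qdim (L t \<inter> L' s + L i \<inter> L' (s - 1)) (L (t - 1) \<inter> L' s + L i \<inter> L' (s - 1))
    = relpos L L' t s"
proof -
  define A where "A = L t \<inter> L' s"
  define U where "U = L (t - 1) \<inter> L' s"
  define W where "W = L i \<inter> L' (s - 1)"
  have lat: "is_lattice d A" "is_lattice d U" "is_lattice d W"
    unfolding A_def U_def W_def using assms(1,2)[THEN lchain_lattice] by (simp_all add: is_lattice_Int)
  have "U \<subseteq> A"
    unfolding U_def A_def using lchain_mono[OF assms(1), of "t - 1" t] by auto
  then have "A + (U + W) = A + W"
    using set_plus_absorb[OF lat(1,2)[THEN lattice_add_subgroup]] by (simp add: add.assoc[symmetric])
  then have "qdim (A + W) (U + W) = qdim A (A \<inter> (U + W))"
    using qdim_set_plus[OF lat(1) is_lattice_set_plus[OF lat(2,3)]] by simp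
  also have "A \<inter> (U + W) = U + (A \<inter> W)"
    by (rule modular_law[OF lattice_add_subgroup[OF lat(1)] \<open>U \<subseteq> A\<close>])
  also have "A \<inter> W = L t \<inter> L' (s - 1)"
    unfolding A_def W_def
    using lchain_mono[OF assms(1,3)] lchain_mono[OF assms(2), of "s - 1" s] by auto
  finally show ?thesis
    by (simp add: relpos_eq_qdim A_def U_def W_def)
qed

lemma qdim_column_eq_sum_relpos:
  fixes L L' :: "int \<Rightarrow> (nat \<Rightarrow> 'a::{field,finite} fls) set"
  assumes "lchain n d L" "lchain n d L'" "r0 \<le> i" "L r0 \<subseteq> L' i" "i < s"
  shows "qdim (L i \<inter> L' s) (L i \<inter> L' (s - 1)) = (\<Sum>t\<in>{r0<..i}. relpos L L' t s)"
proof -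
  define M where "M t = L t \<inter> L' s + L i \<inter> L' (s - 1)" for t
  have lat: "is_lattice d (M t)" for t
    unfolding M_def using assms(1,2)[THEN lchain_lattice] by (simp add: is_lattice_Int is_lattice_set_plus)
  have step: "M (t - 1) \<subseteq> M t" for t
    unfolding M_def using lchain_mono[OF assms(1), of "t - 1" t] by (auto elim!: set_plus_elim)
  have sub: "add_subgroup (L t \<inter> L' s')" for t s'
    using assms(1,2)[THEN lchain_lattice] by (blast intro: add_subgroup_Int lattice_add_subgroup)
  have "L i \<inter> L' (s - 1) \<subseteq> L i \<inter> L' s"
    using lchain_mono[OF assms(2), of "s - 1" s] by auto
  then have "M i = L i \<inter> L' s"
    unfolding M_def by (rule set_plus_absorb[OF sub sub])
  moreover have "L r0 \<inter> L' s \<subseteq> L i \<inter> L' (s - 1)"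
    using assms(4) lchain_mono[OF assms(1,3)] lchain_mono[OF assms(2), of i "s - 1"] assms(5) by auto
  then have "M r0 = L i \<inter> L' (s - 1)"
    unfolding M_def using set_plus_absorb[OF sub sub] by (simp add: add.commute)
  moreover have "qdim (M i) (M r0) = (\<Sum>t\<in>{r0<..i}. qdim (M t) (M (t - 1)))"
    by (rule qdim_telescope[where M = M, OF lat step assms(3)])
  ultimately show ?thesis
    unfolding M_def using qdim_row_step[OF assms(1,2)] by simp
qed

lemma qdim_Int_eq_sum_relpos:
  fixes L L' :: "int \<Rightarrow> (nat \<Rightarrow> 'a::{field,finite} fls) set"
  assumes "lchain n d L" "lchain n d L'" "r0 \<le> i" "L r0 \<subseteq> L' i" "i \<le> s0" "L i \<subseteq> L' s0"
  shows "qdim (L i) (L i \<inter> L' i) = (\<Sum>s\<in>{i<..s0}. \<Sum>t\<in>{r0<..i}. relpos L L' t s)"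
proof -
  have "qdim (L i \<inter> L' s0) (L i \<inter> L' i) = (\<Sum>s\<in>{i<..s0}. qdim (L i \<inter> L' s) (L i \<inter> L' (s - 1)))"
  proof (rule qdim_telescope[where M = "\<lambda>s. L i \<inter> L' s" and d = d, OF _ _ assms(5)])
    show "is_lattice d (L i \<inter> L' s)" for s
      using assms(1,2)[THEN lchain_lattice] by (simp add: is_lattice_Int)
    show "L i \<inter> L' (s - 1) \<subseteq> L i \<inter> L' s" for s
      using lchain_mono[OF assms(2), of "s - 1" s] by auto
  qed
  also have "\<dots> = (\<Sum>s\<in>{i<..s0}. \<Sum>t\<in>{r0<..i}. relpos L L' t s)"
    by (rule sum.cong[OF refl]) (simp add: qdim_column_eq_sum_relpos[OF assms(1-4)])
  finally show ?thesis
    using assms(6) by (simp add: Int_absorb2)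
qed

lemma sum_relpos_upper_eq_qdim:
  fixes L L' :: "int \<Rightarrow> (nat \<Rightarrow> 'a::{field,finite} fls) set"
  assumes "lchain n d L" "lchain n d L'"
  shows "(\<Sum>(r, s)\<in>{(r, s). r \<le> i \<and> i < s \<and> relpos L L' r s \<noteq> 0}. int (relpos L L' r s))
    = int (qdim (L i) (L i \<inter> L' i))"
proof -
  obtain p :: nat where p: "L (i - int p * int n) \<subseteq> L' i" "L i \<subseteq> L' (i + int p * int n)"
    using lchains_comparable[OF assms] .
  define r0 where "r0 = i - int p * int n"
  define s0 where "s0 = i + int p * int n"
  define E where "E = {(r, s). r \<le> i \<and> i < s \<and> relpos L L' r s \<noteq> 0}"
  have "r0 < r \<and> s \<le> s0" if rs: "(r, s) \<in> E" for r s
  proof -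
    have "L r \<subseteq> L i" "L' i \<subseteq> L' (s - 1)"
      using rs lchain_mono[OF assms(1), of r i] lchain_mono[OF assms(2), of i "s - 1"] by (auto simp: E_def)
    moreover have "\<not> L r \<inter> L' s \<subseteq> L' (s - 1)"
      using rs relpos_eq_0[OF assms] by (auto simp: E_def)
    ultimately show ?thesis
      using p lchain_mono[OF assms(1), of r r0] lchain_mono[OF assms(2), of s0 "s - 1"]
      unfolding r0_def s0_def by (meson inf.coboundedI1 le_less_linear order_trans zle_diff1_eq)
  qed
  then have "E \<subseteq> {r0<..i} \<times> {i<..s0}"
    by (auto simp: E_def)
  then have "(\<Sum>(r, s)\<in>E. int (relpos L L' r s)) = (\<Sum>(r, s)\<in>{r0<..i} \<times> {i<..s0}. int (relpos L L' r s))"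
    by (intro sum.mono_neutral_left) (auto simp: E_def)
  also have "\<dots> = int (\<Sum>s\<in>{i<..s0}. \<Sum>r\<in>{r0<..i}. relpos L L' r s)"
    by (simp add: sum.cartesian_product[symmetric] sum.swap[of _ "{r0<..i}"])
  also have "\<dots> = int (qdim (L i) (L i \<inter> L' i))"
    using qdim_Int_eq_sum_relpos[OF assms _ p(1)[folded r0_def] _ p(2)[folded s0_def]]
    by (simp add: r0_def s0_def of_nat_sum)
  finally show ?thesis unfolding E_def .
qed

lemma eps_relpos_eq_qdim_diff:
  fixes L L' :: "int \<Rightarrow> (nat \<Rightarrow> 'a::{field,finite} fls) set"
  assumes "lchain n d L" "lchain n d L'" "is_lattice d S" "S \<subseteq> L i" "S \<subseteq> L' i"
  shows "eps (relpos L L') i = int (qdim (L i) S) - int (qdim (L' i) S)"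
proof -
  define E' where "E' = {(r, s). r \<le> i \<and> i < s \<and> relpos L' L r s \<noteq> 0}"
  have "{(r, s). i < r \<and> s \<le> i \<and> relpos L L' r s \<noteq> 0} = prod.swap ` E'"
    by (auto simp: E'_def relpos_swap image_iff)
  then have "(\<Sum>(r, s)\<in>{(r, s). i < r \<and> s \<le> i \<and> relpos L L' r s \<noteq> 0}. int (relpos L L' r s))
      = (\<Sum>(r, s)\<in>E'. int (relpos L' L r s))"
    by (simp add: sum.reindex case_prod_beta relpos_swap)
  also have "\<dots> = int (qdim (L' i) (L' i \<inter> L i))"
    unfolding E'_def by (rule sum_relpos_upper_eq_qdim[OF assms(2,1)])
  finally have lower: "(\<Sum>(r, s)\<in>{(r, s). i < r \<and> s \<le> i \<and> relpos L L' r s \<noteq> 0}. int (relpos L L' r s))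
      = int (qdim (L' i) (L' i \<inter> L i))" .
  have lat: "is_lattice d (L i)" "is_lattice d (L' i)"
    using assms(1,2) by (simp_all add: lchain_lattice)
  have "qdim (L i) S = qdim (L i) (L i \<inter> L' i) + qdim (L i \<inter> L' i) S"
    using assms(4,5) by (intro qdim_tower[OF lat(1) is_lattice_Int[OF lat] assms(3)]) auto
  moreover have "qdim (L' i) S = qdim (L' i) (L' i \<inter> L i) + qdim (L i \<inter> L' i) S"
    using assms(4,5) qdim_tower[OF lat(2) is_lattice_Int[OF lat(2,1)] assms(3)]
    by (simp add: Int_commute)
  ultimately show ?thesis
    unfolding eps_def lower sum_relpos_upper_eq_qdim[OF assms(1,2)] by simp
qed

lemma eps_relpos_add:
  fixes L L' L'' :: "int \<Rightarrow> (nat \<Rightarrow> 'a::{field,finite} fls) set"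
  assumes "lchain n d L" "lchain n d L''" "lchain n d L'"
  shows "eps (relpos L L') i = eps (relpos L'' L') i + eps (relpos L L'') i"
proof -
  have lat: "is_lattice d (L i)" "is_lattice d (L'' i)" "is_lattice d (L' i)"
    using assms by (simp_all add: lchain_lattice)
  define S where "S = L i \<inter> L'' i \<inter> L' i"
  have "is_lattice d S" "S \<subseteq> L i" "S \<subseteq> L'' i" "S \<subseteq> L' i"
    unfolding S_def using lat by (auto intro!: is_lattice_Int)
  then show ?thesis
    using eps_relpos_eq_qdim_diff[OF assms(1,3)] eps_relpos_eq_qdim_diff[OF assms(2,3)]
      eps_relpos_eq_qdim_diff[OF assms(1,2)]
    by simp
qed

section \<open>Realizing a relative position by monomial lattice chains\<close>

lemma monomial_lchain:
  assumes "\<And>k i. F k i \<le> F k (i - 1)" "\<And>k i. F k (i + int n) = F k i - 1"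
  shows "lchain n d (\<lambda>i. monomial_lattice d (\<lambda>k. F k i))"
  unfolding lchain_def
proof (intro conjI allI)
  fix i
  show "is_lattice d (monomial_lattice d (\<lambda>k. F k i))"
    by (rule is_lattice_monomial_lattice)
  show "monomial_lattice d (\<lambda>k. F k (i - 1)) \<subseteq> monomial_lattice d (\<lambda>k. F k i)"
    by (rule monomial_lattice_mono) (rule assms(1))
  show "monomial_lattice d (\<lambda>k. F k (i + int n)) = (\<lambda>x k. fls_X_inv * x k) ` monomial_lattice d (\<lambda>k. F k i)"
    by (simp add: assms(2) monomial_lattice_shift)
qed

lemma relpos_monomial_lchains:
  assumes "\<And>k i. F k i \<le> F k (i - 1)" "\<And>k j. G k j \<le> G k (j - 1)"
  shows "relpos (\<lambda>i. monomial_lattice d (\<lambda>k. F k i) :: (nat \<Rightarrow> 'a::{field,finite} fls) set)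
      (\<lambda>j. monomial_lattice d (\<lambda>k. G k j)) i j
    = (\<Sum>k<d. nat (min (max (F k (i - 1)) (G k j)) (max (F k i) (G k (j - 1))) - max (F k i) (G k j)))"
  unfolding relpos_eq_qdim monomial_lattice_Int monomial_lattice_set_plus
  by (rule qdim_unique, rule card_cosets_monomial_lattice) (use assms in \<open>simp add: max.coboundedI1 max.coboundedI2\<close>)

lemma div_diff1_eq:
  fixes a n :: int
  assumes "0 < n"
  shows "(a - 1) div n = a div n - (if n dvd a then 1 else 0)"
proof (cases "n dvd a")
  case True
  then obtain c where c: "a = c * n" by (metis dvd_def mult.commute)
  have "(a - 1) div n = ((n - 1) + (c - 1) * n) div n"
    by (rule arg_cong[where f = "\<lambda>x. x div n"]) (simp add: c algebra_simps)
  also have "\<dots> = c - 1"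
    using assms by (simp add: div_pos_pos_trivial)
  finally show ?thesis
    using True assms c by simp
next
  case False
  moreover have "0 \<le> a mod n" "a mod n < n"
    using assms by simp_all
  ultimately have "0 \<le> a mod n - 1" "a mod n - 1 < n"
    by (simp_all add: dvd_eq_mod_eq_0)
  then have "((a mod n - 1) + (a div n) * n) div n = a div n"
    using assms by (simp add: div_pos_pos_trivial)
  moreover have "(a - 1) div n = ((a mod n - 1) + (a div n) * n) div n"
    by (rule arg_cong[where f = "\<lambda>x. x div n"]) simp
  ultimately show ?thesis
    using False by simp
qed

lemma monomial_relpos_entry:
  fixes a b n :: int
  assumes "0 < n"
  shows "nat (min (max (- ((a - 1) div n)) (- (b div n))) (max (- (a div n)) (- ((b - 1) div n)))
      - max (- (a div n)) (- (b div n))) = (if a = b \<and> n dvd a then 1 else 0)"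
proof (cases "n dvd a \<and> n dvd b")
  case True
  then have "a = b \<longleftrightarrow> a div n = b div n"
    by (metis dvd_div_mult_self)
  then show ?thesis
    using True by (auto simp: div_diff1_eq[OF assms] min_def max_def)
next
  case False
  then show ?thesis
    by (auto simp: div_diff1_eq[OF assms] min_def max_def)
qed

lemma Xi_periodic:
  assumes "Xi n d C"
  shows "C (i + c * int n) (j + c * int n) = C i j"
proof (induction c rule: int_induct[where k = 0])
  case (step1 c)
  have "C (i + (c + 1) * int n) (j + (c + 1) * int n) = C ((i + c * int n) + int n) ((j + c * int n) + int n)"
    by (simp add: algebra_simps)
  then show ?case using assms step1.IH unfolding Xi_def by simp
next
  case (step2 c)
  have "C (i + c * int n) (j + c * int n) = C ((i + (c - 1) * int n) + int n) ((j + (c - 1) * int n) + int n)"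
    by (simp add: algebra_simps)
  then show ?case using assms step2.IH unfolding Xi_def by simp
qed simp

lemma Xi_enumeration:
  assumes "Xi n d C"
  obtains xs :: "(int \<times> int) list"
  where "length xs = d" "\<And>i j. (i, j) \<in> set xs \<Longrightarrow> 1 \<le> i \<and> i \<le> int n"
    "\<And>i j. 1 \<le> i \<Longrightarrow> i \<le> int n \<Longrightarrow> count (mset xs) (i, j) = C i j"
proof -
  define supp where "supp = {(i, j). 1 \<le> i \<and> i \<le> int n \<and> C i j \<noteq> 0}"
  have "finite supp" "(\<Sum>(i, j)\<in>supp. C i j) = d"
    using assms unfolding Xi_def supp_def by auto
  define M where "M = (\<Sum>(i, j)\<in>supp. replicate_mset (C i j) (i, j))"
  have count_M: "count M z = (if z \<in> supp then case_prod C z else 0)" for z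
    unfolding M_def count_sum using \<open>finite supp\<close> by (simp add: case_prod_beta sum.delta)
  have "size M = d"
    unfolding M_def using \<open>finite supp\<close> \<open>(\<Sum>(i, j)\<in>supp. C i j) = d\<close>
    by (induction supp rule: finite_induct) (auto simp: case_prod_beta)
  obtain xs where "mset xs = M" using ex_mset by blast
  show ?thesis
  proof (rule that)
    show "length xs = d" using \<open>mset xs = M\<close> \<open>size M = d\<close> by (metis size_mset)
    show "1 \<le> i \<and> i \<le> int n" if "(i, j) \<in> set xs" for i j
    proof -
      have "0 < count M (i, j)"
        using that \<open>mset xs = M\<close> by (metis count_greater_zero_iff set_mset_mset)
      then show ?thesis by (simp add: count_M supp_def split: if_splits)
    qed
    show "count (mset xs) (i, j) = C i j" if "1 \<le> i" "i \<le> int n" for i j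
      using that count_M[of "(i, j)"] \<open>mset xs = M\<close> by (auto simp: supp_def)
  qed
qed

(* Along the basis vector e_k the chain jumps exactly at the indices congruent to \<rho> k mod n. *)
definition monomial_chain :: "nat \<Rightarrow> nat \<Rightarrow> (nat \<Rightarrow> int) \<Rightarrow> int \<Rightarrow> (nat \<Rightarrow> 'a::field fls) set" where
  "monomial_chain n d \<rho> i = monomial_lattice d (\<lambda>k. - ((i - \<rho> k) div int n))"

lemma monomial_chain_step: "- ((i - r) div int n) \<le> - ((i - 1 - r) div int n)"
  by (cases "n = 0") (simp_all add: zdiv_mono1)

lemma lchain_monomial_chain:
  assumes "1 \<le> n"
  shows "lchain n d (monomial_chain n d \<rho>)"
  unfolding monomial_chain_def[abs_def]
proof (rule monomial_lchain[where F = "\<lambda>k i. - ((i - \<rho> k) div int n)", OF monomial_chain_step])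
  fix k i
  have "(i + int n - \<rho> k) div int n = ((i - \<rho> k) + int n) div int n"
    by (rule arg_cong[where f = "\<lambda>x. x div int n"]) simp
  then show "- ((i + int n - \<rho> k) div int n) = - ((i - \<rho> k) div int n) - 1"
    using assms by simp
qed

lemma relpos_monomial_chain:
  assumes "1 \<le> n"
  shows "relpos (monomial_chain n d \<rho>) (monomial_chain n d \<sigma> :: int \<Rightarrow> (nat \<Rightarrow> 'a::{field,finite} fls) set) i j
    = card {k. k < d \<and> i - \<rho> k = j - \<sigma> k \<and> int n dvd (i - \<rho> k)}"
proof -
  have n: "0 < int n" using assms by simp
  have "relpos (monomial_chain n d \<rho>) (monomial_chain n d \<sigma> :: int \<Rightarrow> (nat \<Rightarrow> 'a fls) set) i j
      = (\<Sum>k<d. nat (min (max (- ((i - 1 - \<rho> k) div int n)) (- ((j - \<sigma> k) div int n)))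
          (max (- ((i - \<rho> k) div int n)) (- ((j - 1 - \<sigma> k) div int n)))
          - max (- ((i - \<rho> k) div int n)) (- ((j - \<sigma> k) div int n))))"
    unfolding monomial_chain_def[abs_def] by (rule relpos_monomial_lchains) (rule monomial_chain_step)+
  also have "\<dots> = (\<Sum>k<d. if i - \<rho> k = j - \<sigma> k \<and> int n dvd (i - \<rho> k) then 1 else 0)"
  proof (intro sum.cong refl)
    fix k
    have "i - 1 - \<rho> k = (i - \<rho> k) - 1" "j - 1 - \<sigma> k = (j - \<sigma> k) - 1"
      by simp_all
    then show "nat (min (max (- ((i - 1 - \<rho> k) div int n)) (- ((j - \<sigma> k) div int n)))
          (max (- ((i - \<rho> k) div int n)) (- ((j - 1 - \<sigma> k) div int n)))
          - max (- ((i - \<rho> k) div int n)) (- ((j - \<sigma> k) div int n)))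
        = (if i - \<rho> k = j - \<sigma> k \<and> int n dvd (i - \<rho> k) then 1 else 0)"
      by (simp only: monomial_relpos_entry[OF n])
  qed
  finally show ?thesis
    by (simp add: sum.inter_filter[symmetric])
qed

lemma exists_lchains_with_relpos:
  assumes "1 \<le> n" "Xi n d C"
  shows "\<exists>L L' :: int \<Rightarrow> (nat \<Rightarrow> 'a::{field,finite} fls) set.
    lchain n d L \<and> lchain n d L' \<and> relpos L L' = C"
proof -
  obtain xs where xs: "length xs = d" "\<And>i j. (i, j) \<in> set xs \<Longrightarrow> 1 \<le> i \<and> i \<le> int n"
    "\<And>i j. 1 \<le> i \<Longrightarrow> i \<le> int n \<Longrightarrow> count (mset xs) (i, j) = C i j"
    using Xi_enumeration[OF assms(2)] by blast
  define \<rho> where "\<rho> k = fst (xs ! k)" for k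
  define \<sigma> where "\<sigma> k = snd (xs ! k)" for k
  have "relpos (monomial_chain n d \<rho>) (monomial_chain n d \<sigma> :: int \<Rightarrow> (nat \<Rightarrow> 'a fls) set) i j = C i j"
    for i j
  proof -
    define q where "q = (i - 1) div int n"
    define i0 where "i0 = (i - 1) mod int n + 1"
    define j0 where "j0 = j - q * int n"
    have "0 \<le> (i - 1) mod int n" "(i - 1) mod int n < int n"
      using assms(1) by simp_all
    moreover have "i - 1 = (i - 1) mod int n + q * int n"
      unfolding q_def by simp
    ultimately have i0: "1 \<le> i0" "i0 \<le> int n" "i = i0 + q * int n"
      unfolding i0_def by linarith+
    have "i - \<rho> k = j - \<sigma> k \<and> int n dvd (i - \<rho> k) \<longleftrightarrow> (i0, j0) = xs ! k" if "k < d" for k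
    proof -
      have "(\<rho> k, \<sigma> k) \<in> set xs"
        using that xs(1) by (simp add: \<rho>_def \<sigma>_def)
      then have "1 \<le> \<rho> k" "\<rho> k \<le> int n"
        using xs(2) by blast+
      have "int n dvd (i - \<rho> k) \<longleftrightarrow> (i - 1) mod int n = (\<rho> k - 1) mod int n"
        by (simp add: mod_eq_dvd_iff)
      also have "\<dots> \<longleftrightarrow> \<rho> k = i0"
        using \<open>1 \<le> \<rho> k\<close> \<open>\<rho> k \<le> int n\<close> unfolding i0_def by (auto simp: mod_pos_pos_trivial)
      finally show ?thesis
        using i0(3) by (cases "xs ! k") (auto simp: \<rho>_def \<sigma>_def j0_def)
    qed
    then have "{k. k < d \<and> i - \<rho> k = j - \<sigma> k \<and> int n dvd (i - \<rho> k)}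
        = {k. k < length xs \<and> (i0, j0) = xs ! k}"
      using xs(1) by auto
    then have "relpos (monomial_chain n d \<rho>) (monomial_chain n d \<sigma> :: int \<Rightarrow> (nat \<Rightarrow> 'a fls) set) i j
        = count (mset xs) (i0, j0)"
      by (simp add: relpos_monomial_chain[OF assms(1)] count_mset count_list_eq_length_filter
          length_filter_conv_card)
    also have "\<dots> = C i j"
      using xs(3)[OF i0(1,2)] Xi_periodic[OF assms(2), of i0 q j0] by (simp add: i0(3) j0_def)
    finally show ?thesis .
  qed
  then show ?thesis
    using lchain_monomial_chain[OF assms(1)] by blast
qed

theorem mainTheorem5:
  fixes n d :: nat and A B C :: "int \<Rightarrow> int \<Rightarrow> nat" and \<alpha> \<beta> :: "int \<Rightarrow> nat"
    and F :: "'a::{field,finite} itself"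
  assumes "n \<ge> 1"
    and "Xi n d A" and "Xi n d B" and "Xi n d C"
    and "B = (\<lambda>r s. \<Sum>j = 1..int n. \<beta> j * Emat n j j r s + \<alpha> j * Emat n j (j + 1) r s)
       \<or> B = (\<lambda>r s. \<Sum>j = 1..int n. \<beta> j * Emat n j j r s + \<alpha> j * Emat n (j + 1) j r s)"
    and "struct_count F n d B A C \<noteq> 0"
  shows "\<forall>i::int. eps C i = eps A i + eps B i"
proof -
  define P where "P = (SOME P :: (int \<Rightarrow> (nat \<Rightarrow> 'a fls) set) \<times> (int \<Rightarrow> (nat \<Rightarrow> 'a fls) set).
    lchain n d (fst P) \<and> lchain n d (snd P) \<and> relpos (fst P) (snd P) = C)"
  have "lchain n d (fst P) \<and> lchain n d (snd P) \<and> relpos (fst P) (snd P) = C"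
    unfolding P_def by (rule someI_ex) (use exists_lchains_with_relpos[OF assms(1,4)] in auto)
  then have P: "lchain n d (fst P)" "lchain n d (snd P)" "relpos (fst P) (snd P) = C"
    by auto
  have "{L''. lchain n d L'' \<and> relpos (fst P) L'' = B \<and> relpos L'' (snd P) = A} \<noteq> {}"
    using assms(6) unfolding struct_count_def Let_def P_def[symmetric] by (metis card.empty)
  then obtain L'' where "lchain n d L''" "relpos (fst P) L'' = B" "relpos L'' (snd P) = A"
    by blast
  then show ?thesis
    using eps_relpos_add[OF P(1) \<open>lchain n d L''\<close> P(2)] P(3) by simp
qed

end
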